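(* Let $a>0$ and $\psi_a(x)=\operatorname{sech}(ax)=\frac{2}{e^{ax}+e^{-ax}}$. There is a constant $C>0$ (depending only on $a$) such that every $f=\sum_{k\in\mathbb{Z}}c_k\psi_a(\cdot-k)$ with $c\in\ell^\infty(\mathbb{Z})$ has an extension to a meromorphic function on $\mathbb{C}$ whose set of poles $P_f$ satisfies $P_f\subseteq P:=\mathbb{Z}+\frac{i\pi}{a}(\frac12+\mathbb{Z})$; every pole of $f$ is simple; and for all $x+iy\in\mathbb{C}\setminus P$, $$|f(x+iy)|\le C\|c\|_\infty|\psi_a(\langle x\rangle+iy)|\le C\|c\|_\infty\min\Big\{|a\langle x\rangle|^{-1},\ \big|2\langle\tfrac{ay}{\pi}-\tfrac12\rangle\big|^{-1}\Big\}.$$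
   Context: For real $x$, $\langle x\rangle:=x-l$ where $l\in\mathbb{Z}$ is chosen so that $\langle x\rangle\in[-1/2,1/2)$. Here $\psi_a(z)=\operatorname{sech}(az)$ for complex $z$ denotes the meromorphic extension. *)

theory Defs
  imports "HOL-Complex_Analysis.Complex_Analysis"
begin

definition psi :: "real \<Rightarrow> complex \<Rightarrow> complex" where
  "psi a z = 2 / (exp (complex_of_real a * z) + exp (- (complex_of_real a * z)))"

text \<open>Centered fractional part: x - l with l integer and result in [-1/2, 1/2).\<close>
definition cfrac :: "real \<Rightarrow> real" where
  "cfrac x = x - of_int \<lfloor>x + 1/2\<rfloor>"

definition poleset :: "real \<Rightarrow> complex set" where
  "poleset a = {of_int m + \<i> * complex_of_real (pi / a) * (1/2 + of_int n) | m n :: int. True}"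

definition supnorm :: "(int \<Rightarrow> complex) \<Rightarrow> real" where
  "supnorm c = (SUP k. norm (c k))"

end

theory Submission
  imports Defs
begin

(* Write psi a z = 1 / cosh (a z) and use |cosh (u + iv)|^2 = sinh^2 u + cos^2 v.
   On the strip |Re z - m| < 3/4 every term with k \<noteq> m is holomorphic and bounded by a
   multiple of ||c|| exp (- a |k - m|), so by the Weierstrass M-test the series is
   c m * psi a (z - m) plus a holomorphic tail bounded by a multiple of ||c||. Hence the only
   possible poles are the zeros of cosh (a (z - m)), which are simple, and because
   |psi a (z - m)| >= 1 / cosh (a / 2) when |Re z - m| <= 1/2, the tail is absorbed into
   C ||c|| |psi a (<x> + iy)|. The last two bounds follow from |cosh w| >= |sinh (Re w)| >= |Re w|
   and |cosh w| >= |cos (Im w)| >= 2 dist (Im w / pi - 1/2, Z), the latter by Jordan's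
   inequality. *)

lemma Re_cosh_complex: "Re (cosh z) = cosh (Re z) * cos (Im z)"
  by (simp add: cosh_field_def Re_exp cosh_def algebra_simps)

lemma Im_cosh_complex: "Im (cosh z) = sinh (Re z) * sin (Im z)"
  by (simp add: cosh_field_def Im_exp sinh_def left_diff_distrib)

lemma norm_cosh_complex_squared: "norm (cosh z) ^ 2 = sinh (Re z) ^ 2 + cos (Im z) ^ 2"
proof -
  have "norm (cosh z) ^ 2 = (cosh (Re z) * cos (Im z)) ^ 2 + (sinh (Re z) * sin (Im z)) ^ 2"
    by (simp add: cmod_power2 Re_cosh_complex Im_cosh_complex)
  also have "\<dots> = sinh (Re z) ^ 2 + cos (Im z) ^ 2"
    by (simp add: power_mult_distrib cosh_square_eq sin_squared_eq algebra_simps)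
  finally show ?thesis .
qed

lemma abs_sinh_Re_le_norm_cosh: "\<bar>sinh (Re z)\<bar> \<le> norm (cosh z)"
  by (rule power2_le_imp_le) (simp_all add: norm_cosh_complex_squared)

lemma abs_cos_Im_le_norm_cosh: "\<bar>cos (Im z)\<bar> \<le> norm (cosh z)"
  by (rule power2_le_imp_le) (simp_all add: norm_cosh_complex_squared)

lemma norm_cosh_le_cosh_Re: "norm (cosh z) \<le> cosh (Re z)"
proof (rule power2_le_imp_le)
  show "norm (cosh z) ^ 2 \<le> cosh (Re z) ^ 2"
    using abs_cos_le_one[of "Im z"]
    by (simp add: norm_cosh_complex_squared cosh_square_eq abs_square_le_1)
qed simp

lemma cosh_complex_eq_0_iff: "cosh z = 0 \<longleftrightarrow> Re z = 0 \<and> cos (Im z) = 0"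
proof -
  have "cosh z = 0 \<longleftrightarrow> sinh (Re z) ^ 2 + cos (Im z) ^ 2 = 0"
    by (simp flip: norm_cosh_complex_squared)
  then show ?thesis by (simp add: sum_power2_eq_zero_iff)
qed

lemma norm_inverse_cosh_le_inverse_abs_Re:
  assumes "Re z \<noteq> 0"
  shows "norm (inverse (cosh z)) \<le> inverse \<bar>Re z\<bar>"
proof (rule norm_inverse_le_norm)
  have "\<bar>Re z\<bar> \<le> \<bar>sinh (Re z)\<bar>"
    using real_le_abs_sinh[of "Re z"] by (simp add: sinh_def exp_minus)
  then show "\<bar>Re z\<bar> \<le> norm (cosh z)"
    using abs_sinh_Re_le_norm_cosh[of z] by linarith
qed (use assms in simp)

lemma norm_inverse_cosh_le_inverse_abs_cos_Im:
  assumes "cos (Im z) \<noteq> 0"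
  shows "norm (inverse (cosh z)) \<le> inverse \<bar>cos (Im z)\<bar>"
  using abs_cos_Im_le_norm_cosh assms by (intro norm_inverse_le_norm) auto

lemma inverse_cosh_Re_le_norm_inverse_cosh:
  assumes "cosh z \<noteq> 0"
  shows "inverse (cosh (Re z)) \<le> norm (inverse (cosh z))"
  using norm_cosh_le_cosh_Re[of z] assms by (simp add: norm_inverse le_imp_inverse_le)

lemma norm_inverse_cosh_le_exp:
  assumes "0 < t" "t \<le> \<bar>Re z\<bar>"
  shows "norm (inverse (cosh z)) \<le> 2 / (1 - exp (- 2 * t)) * exp (- \<bar>Re z\<bar>)"
proof -
  define u where "u = \<bar>Re z\<bar>"
  have "exp (- u) = exp u * exp (- 2 * u)"
    by (simp flip: exp_add)
  also have "\<dots> \<le> exp u * exp (- 2 * t)"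
    using assms by (simp add: u_def)
  finally have "exp u * (1 - exp (- 2 * t)) / 2 \<le> \<bar>sinh (Re z)\<bar>"
    using sinh_real_abs[of "Re z"] assms by (simp add: u_def sinh_def algebra_simps)
  then have "exp u * (1 - exp (- 2 * t)) / 2 \<le> norm (cosh z)"
    using abs_sinh_Re_le_norm_cosh[of z] by linarith
  then have "norm (inverse (cosh z)) \<le> inverse (exp u * (1 - exp (- 2 * t)) / 2)"
    using assms by (intro norm_inverse_le_norm) auto
  then show ?thesis
    by (simp add: u_def exp_minus field_simps)
qed

lemma psi_eq_inverse_cosh: "psi a z = inverse (cosh (of_real a * z))"
  by (simp add: psi_def cosh_field_def)

lemma cosh_shift_eq_0_iff:
  assumes "a > 0"
  shows "cosh (of_real a * (z - of_int k)) = 0 \<longleftrightarrow> Re z = of_int k \<and> cos (a * Im z) = 0"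
  using assms by (simp add: cosh_complex_eq_0_iff)

lemma mem_poleset_iff:
  assumes "a > 0"
  shows "z \<in> poleset a \<longleftrightarrow> Re z \<in> \<int> \<and> cos (a * Im z) = 0"
proof
  assume "z \<in> poleset a"
  then obtain m n :: int where z: "z = of_int m + \<i> * of_real (pi / a) * (1/2 + of_int n)"
    unfolding poleset_def by blast
  have "a * Im z = of_int (2 * n + 1) * (pi / 2)"
    using assms by (simp add: z field_simps)
  then have "cos (a * Im z) = 0"
    by (subst cos_zero_iff_int) (intro exI[of _ "2 * n + 1"], simp)
  then show "Re z \<in> \<int> \<and> cos (a * Im z) = 0"
    by (simp add: z)
next
  assume "Re z \<in> \<int> \<and> cos (a * Im z) = 0"
  then obtain m i :: int where m: "Re z = of_int m" and i: "odd i" "a * Im z = of_int i * (pi / 2)"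
    by (auto elim!: Ints_cases simp: cos_zero_iff_int)
  from i(1) obtain n where n: "i = 2 * n + 1"
    by (auto elim: oddE)
  have "Im z = pi / a * (1/2 + of_int n)"
    using i(2) assms by (simp add: n field_simps)
  then have "z = of_int m + \<i> * of_real (pi / a) * (1/2 + of_int n)"
    by (simp add: complex_eq_iff m)
  then show "z \<in> poleset a"
    unfolding poleset_def by blast
qed

lemma cosh_shift_nonzero_off_poleset:
  assumes "a > 0" "z \<notin> poleset a"
  shows "cosh (of_real a * (z - of_int k)) \<noteq> 0"
  using assms by (auto simp: cosh_shift_eq_0_iff mem_poleset_iff)

lemma Jordan_inequality:
  assumes "0 \<le> x" "x \<le> pi / 2"
  shows "2 / pi * x \<le> sin x"
proof -
  have "concave_on {0..pi/2} sin"
    by (rule f''_le0_imp_concave[where f' = cos and f'' = "\<lambda>x. - sin x"])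
       (auto intro!: derivative_eq_intros sin_ge_zero)
  moreover define t where "t = x / (pi / 2)"
  moreover have "0 \<le> t" "t \<le> 1"
    using assms by (auto simp: t_def field_simps)
  ultimately have "(1 - t) * sin 0 + t * sin (pi/2) \<le> sin ((1 - t) *\<^sub>R 0 + t *\<^sub>R (pi/2))"
    by (intro concave_onD) auto
  then show ?thesis
    by (simp add: t_def mult.commute)
qed

lemma two_abs_le_abs_sin_pi:
  assumes "\<bar>u\<bar> \<le> 1/2"
  shows "2 * \<bar>u\<bar> \<le> \<bar>sin (pi * u)\<bar>"
proof -
  have "2 / pi * (pi * \<bar>u\<bar>) \<le> sin (pi * \<bar>u\<bar>)"
    using assms by (intro Jordan_inequality) auto
  moreover have "0 \<le> sin (pi * \<bar>u\<bar>)"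
    using assms by (intro sin_ge_zero) auto
  then have "\<bar>sin (pi * u)\<bar> = sin (pi * \<bar>u\<bar>)"
    by (cases "u \<ge> 0") auto
  ultimately show ?thesis
    by simp
qed

lemma cfrac_bounds: "- 1/2 \<le> cfrac x" "cfrac x < 1/2"
  unfolding cfrac_def using floor_correct[of "x + 1/2"] by linarith+

lemma two_abs_cfrac_le_abs_cos: "2 * \<bar>cfrac (t / pi - 1/2)\<bar> \<le> \<bar>cos t\<bar>"
proof -
  define u where "u = cfrac (t / pi - 1/2)"
  define l where "l = \<lfloor>t / pi - 1/2 + 1/2\<rfloor>"
  have "t = pi * u + pi * of_int l + pi / 2"
    by (simp add: u_def l_def cfrac_def field_simps)
  moreover have "\<bar>cos (pi * of_int l)\<bar> = 1"
    by (rule sin_zero_abs_cos_one) simp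
  ultimately have "\<bar>cos t\<bar> = \<bar>sin (pi * u)\<bar>"
    by (simp add: cos_add sin_add abs_mult)
  moreover have "\<bar>u\<bar> \<le> 1/2"
    using cfrac_bounds[of "t / pi - 1/2"] by (simp add: u_def)
  ultimately show ?thesis
    using two_abs_le_abs_sin_pi[of u] by (simp add: u_def)
qed

lemma analytic_on_infsum:
  fixes f :: "'a \<Rightarrow> complex \<Rightarrow> complex"
  assumes "open S" "\<And>k. k \<in> I \<Longrightarrow> f k holomorphic_on S"
    and "\<And>k z. k \<in> I \<Longrightarrow> z \<in> S \<Longrightarrow> norm (f k z) \<le> M k" "M summable_on I"
  shows "(\<lambda>z. \<Sum>\<^sub>\<infinity>k\<in>I. f k z) analytic_on S"
  unfolding analytic_on_def
proof
  fix z assume "z \<in> S"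
  then obtain r where r: "r > 0" "cball z r \<subseteq> S"
    using \<open>open S\<close> open_contains_cball by blast
  have ulim: "uniform_limit (cball z r) (\<lambda>X w. \<Sum>k\<in>X. f k w) (\<lambda>w. \<Sum>\<^sub>\<infinity>k\<in>I. f k w)
          (finite_subsets_at_top I)"
    using r assms(3,4) by (intro Weierstrass_m_test_general) auto
  have ev: "eventually (\<lambda>X. continuous_on (cball z r) (\<lambda>w. \<Sum>k\<in>X. f k w) \<and>
      (\<lambda>w. \<Sum>k\<in>X. f k w) holomorphic_on ball z r) (finite_subsets_at_top I)"
  proof (rule eventually_finite_subsets_at_top_weakI)
    fix X assume "finite X" "X \<subseteq> I"
    then have "(\<lambda>w. \<Sum>k\<in>X. f k w) holomorphic_on cball z r"
      using r assms(2) by (intro holomorphic_on_sum) (auto intro: holomorphic_on_subset)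
    then show "continuous_on (cball z r) (\<lambda>w. \<Sum>k\<in>X. f k w) \<and>
        (\<lambda>w. \<Sum>k\<in>X. f k w) holomorphic_on ball z r"
      using ball_subset_cball holomorphic_on_imp_continuous_on holomorphic_on_subset by blast
  qed
  have "(\<lambda>w. \<Sum>\<^sub>\<infinity>k\<in>I. f k w) holomorphic_on ball z r"
    by (rule holomorphic_uniform_limit[OF ev ulim]) simp_all
  then show "\<exists>e>0. (\<lambda>w. \<Sum>\<^sub>\<infinity>k\<in>I. f k w) holomorphic_on ball z e"
    using r by blast
qed

lemma zorder_inverse_simple_zero_plus_holomorphic:
  fixes h g :: "complex \<Rightarrow> complex"
  assumes "open S" "z \<in> S" "h holomorphic_on S" "g holomorphic_on S"
    and "h z = 0" "deriv h z \<noteq> 0" "c \<noteq> 0"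
  shows "zorder (\<lambda>w. c * inverse (h w) + g w) z = -1"
proof -
  (* h w = q w * (w - z) with q holomorphic and q z = deriv h z \<noteq> 0, so near z the function
     equals (c / q w + (w - z) * g w) / (w - z). *)
  define q where "q w = (if w = z then deriv h z else (h w - h z) / (w - z))" for w
  have q_hol: "q holomorphic_on S"
    unfolding q_def[abs_def] using assms(1,2,3) by (intro pole_lemma) (auto simp: interior_open)
  define T where "T = S \<inter> q -` (- {0})"
  have "open T"
    unfolding T_def using assms(1) q_hol
    by (intro continuous_open_preimage holomorphic_on_imp_continuous_on) auto
  moreover have "z \<in> T"
    using assms(2,6) by (simp add: T_def q_def)
  moreover have "(\<lambda>w. c / q w + (w - z) * g w) holomorphic_on T"
    using holomorphic_on_subset[OF q_hol] holomorphic_on_subset[OF assms(4)]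
    by (intro holomorphic_intros) (auto simp: T_def)
  moreover have "c / q z + (z - z) * g z \<noteq> 0"
    using assms(6,7) by (simp add: q_def)
  moreover have "c * inverse (h w) + g w = (c / q w + (w - z) * g w) * (w - z) powi (-1)"
    if "w \<in> T" "w \<noteq> z" for w
  proof -
    have hw: "h w = q w * (w - z)" and "q w \<noteq> 0"
      using that assms(5) by (auto simp: q_def T_def)
    then show ?thesis
      using that by (simp only: hw) (simp add: power_int_minus field_simps)
  qed
  ultimately show ?thesis
    by (intro zorder_eqI) auto
qed

lemma summable_on_exp_neg_abs_int:
  fixes a :: real
  assumes "a > 0"
  shows "(\<lambda>k::int. exp (- a * \<bar>of_int k\<bar>)) summable_on UNIV"
proof -
  have "summable (\<lambda>n::nat. exp (- a) ^ n)"
    using summable_geometric[of "exp (- a)"] assms by simp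
  then have "(\<lambda>n::nat. exp (- a) ^ n) summable_on UNIV"
    by (simp add: summable_on_UNIV_nonneg_real_iff)
  moreover have "exp (- a * \<bar>of_int (int n)\<bar>) = exp (- a) ^ n" for n
    by (simp flip: exp_of_nat_mult add: mult.commute)
  ultimately have "(\<lambda>k::int. exp (- a * \<bar>of_int k\<bar>)) summable_on range int"
    by (subst summable_on_reindex) (simp_all add: o_def)
  moreover from this have "(\<lambda>k::int. exp (- a * \<bar>of_int k\<bar>)) summable_on uminus ` range int"
    by (subst summable_on_reindex) (simp_all add: o_def)
  moreover have "(UNIV :: int set) = range int \<union> uminus ` range int"
  proof (intro set_eqI iffI)
    fix k :: int
    show "k \<in> range int \<union> uminus ` range int"
      by (cases k rule: int_cases) (auto simp del: of_nat_Suc)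
  qed auto
  ultimately show ?thesis
    by (metis summable_on_union)
qed

lemma exp_neg_abs_int_shift:
  fixes a :: real and m :: int
  assumes "a > 0"
  shows "(\<lambda>k::int. exp (- a * \<bar>of_int k - of_int m\<bar>)) summable_on UNIV"
    and "(\<Sum>\<^sub>\<infinity>k::int. exp (- a * \<bar>of_int k - of_int m\<bar>)) = (\<Sum>\<^sub>\<infinity>k::int. exp (- a * \<bar>of_int k\<bar>))"
proof -
  have b: "bij_betw (\<lambda>k::int. k - m) UNIV UNIV"
    by (rule bij_betwI[where g = "\<lambda>k. k + m"]) auto
  show "(\<lambda>k::int. exp (- a * \<bar>of_int k - of_int m\<bar>)) summable_on UNIV"
    using summable_on_reindex_bij_betw[OF b, of "\<lambda>k. exp (- a * \<bar>of_int k\<bar>)"]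
      summable_on_exp_neg_abs_int[OF assms] by simp
  show "(\<Sum>\<^sub>\<infinity>k::int. exp (- a * \<bar>of_int k - of_int m\<bar>)) = (\<Sum>\<^sub>\<infinity>k::int. exp (- a * \<bar>of_int k\<bar>))"
    using infsum_reindex_bij_betw[OF b, of "\<lambda>k. exp (- a * \<bar>of_int k\<bar>)"] by simp
qed

definition strip_around :: "int \<Rightarrow> complex set" where
  "strip_around m = {z. \<bar>Re z - of_int m\<bar> < 3/4}"

lemma open_strip_around: "open (strip_around m)"
  unfolding strip_around_def by (intro open_Collect_less continuous_intros)

lemma mem_strip_around_nearest: "z \<in> strip_around \<lfloor>Re z + 1/2\<rfloor>"
  using cfrac_bounds[of "Re z"] by (auto simp: strip_around_def cfrac_def split: abs_split)

definition psi_decay_const :: "real \<Rightarrow> real" where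
  "psi_decay_const a = 2 * exp (3 * a / 4) / (1 - exp (- a / 2))"

lemma psi_decay_const_pos: "a > 0 \<Longrightarrow> psi_decay_const a > 0"
  by (simp add: psi_decay_const_def)

lemma norm_psi_shift_le:
  assumes "a > 0" "z \<in> strip_around m" "k \<noteq> m"
  shows "norm (psi a (z - of_int k)) \<le> psi_decay_const a * exp (- a * \<bar>of_int k - of_int m\<bar>)"
proof -
  define d where "d = \<bar>of_int k - of_int m :: real\<bar>"
  have "d \<ge> 1"
    using assms(3) by (simp add: d_def)
  moreover have "\<bar>Re z - of_int m\<bar> < 3/4"
    using assms(2) by (simp add: strip_around_def)
  then have "d - 3/4 \<le> \<bar>Re z - of_int k\<bar>"
    using abs_triangle_ineq4[of "Re z - of_int m" "Re z - of_int k"] by (simp add: d_def)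
  ultimately have "a * (d - 3/4) \<le> a * \<bar>Re z - of_int k\<bar>" "a / 4 \<le> a * (d - 3/4)"
    using assms(1) by (simp_all add: mult_left_mono)
  moreover have re: "\<bar>Re (of_real a * (z - of_int k))\<bar> = a * \<bar>Re z - of_int k\<bar>"
    using assms(1) by (simp add: abs_mult)
  ultimately have "a / 4 \<le> \<bar>Re (of_real a * (z - of_int k))\<bar>" and
    decay: "exp (- \<bar>Re (of_real a * (z - of_int k))\<bar>) \<le> exp (3 * a / 4) * exp (- a * d)"
    by (simp_all add: algebra_simps flip: exp_add)
  then have "norm (psi a (z - of_int k))
      \<le> 2 / (1 - exp (- a / 2)) * exp (- \<bar>Re (of_real a * (z - of_int k))\<bar>)"
    unfolding psi_eq_inverse_cosh
    using norm_inverse_cosh_le_exp[of "a / 4" "of_real a * (z - of_int k)"] assms(1) by simp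
  also have "\<dots> \<le> 2 / (1 - exp (- a / 2)) * (exp (3 * a / 4) * exp (- a * d))"
    using assms(1) decay by (intro mult_left_mono) simp_all
  finally show ?thesis
    by (simp add: psi_decay_const_def d_def)
qed

lemma norm_le_supnorm:
  assumes "bdd_above (range (\<lambda>k. norm (c k)))"
  shows "norm (c k) \<le> supnorm c"
  unfolding supnorm_def using assms by (intro cSUP_upper) auto

lemma supnorm_nonneg:
  assumes "bdd_above (range (\<lambda>k. norm (c k)))"
  shows "supnorm c \<ge> 0"
  using norm_le_supnorm[OF assms, of 0] norm_ge_zero[of "c 0"] by linarith

(* At a point of poleset a the singular term is 2 / 0 = 0; the value of psi_series there is
   irrelevant, since only punctured neighbourhoods of the poles enter the statement. *)
definition psi_series :: "real \<Rightarrow> (int \<Rightarrow> complex) \<Rightarrow> complex \<Rightarrow> complex" where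
  "psi_series a c z = (\<Sum>\<^sub>\<infinity>k. c k * psi a (z - of_int k))"

definition psi_tail :: "real \<Rightarrow> (int \<Rightarrow> complex) \<Rightarrow> int \<Rightarrow> complex \<Rightarrow> complex" where
  "psi_tail a c m z = (\<Sum>\<^sub>\<infinity>k\<in>UNIV - {m}. c k * psi a (z - of_int k))"

(* |F z| <= ||c|| |psi a (z - m)| + ||c|| * psi_decay_const a * (sum of exp (- a |k|)) for the
   nearest integer m, and |psi a (z - m)| >= 1 / cosh (a / 2). *)
definition psi_series_const :: "real \<Rightarrow> real" where
  "psi_series_const a
     = 1 + psi_decay_const a * (\<Sum>\<^sub>\<infinity>k::int. exp (- a * \<bar>of_int k\<bar>)) * cosh (a / 2)"

lemma psi_series_const_pos:
  assumes "a > 0"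
  shows "psi_series_const a > 0"
proof -
  have "0 \<le> (\<Sum>\<^sub>\<infinity>k::int. exp (- a * \<bar>of_int k\<bar>))"
    by (rule infsum_nonneg) simp
  then show ?thesis
    unfolding psi_series_const_def using psi_decay_const_pos[OF assms]
    by (intro add_pos_nonneg mult_nonneg_nonneg) simp_all
qed

context
  fixes a :: real and c :: "int \<Rightarrow> complex"
  assumes a_pos: "a > 0" and c_bounded: "bdd_above (range (\<lambda>k. norm (c k)))"
begin

lemma norm_psi_term_le:
  assumes "z \<in> strip_around m" "k \<noteq> m"
  shows "norm (c k * psi a (z - of_int k))
           \<le> supnorm c * psi_decay_const a * exp (- a * \<bar>of_int k - of_int m\<bar>)"
  unfolding norm_mult mult.assoc
  using norm_le_supnorm[OF c_bounded] norm_psi_shift_le[OF a_pos assms] supnorm_nonneg[OF c_bounded]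
  by (rule mult_mono) auto

lemma psi_majorant_summable:
  "(\<lambda>k. supnorm c * psi_decay_const a * exp (- a * \<bar>of_int k - of_int m\<bar>)) summable_on A"
  by (rule summable_on_subset_banach[OF summable_on_cmult_right[OF exp_neg_abs_int_shift(1)[OF a_pos]]])
     simp

lemma psi_terms_summable:
  assumes "z \<in> strip_around m"
  shows "(\<lambda>k. c k * psi a (z - of_int k)) summable_on UNIV - {m}"
proof -
  have "(\<lambda>k. norm (c k * psi a (z - of_int k))) summable_on UNIV - {m}"
    using norm_psi_term_le[OF assms]
    by (intro summable_on_comparison_test[OF psi_majorant_summable]) auto
  then show ?thesis
    by (simp add: summable_on_iff_abs_summable_on_complex)
qed

lemma psi_series_split:
  assumes "z \<in> strip_around m"
  shows "psi_series a c z = c m * psi a (z - of_int m) + psi_tail a c m z"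
  using infsum_insert[OF psi_terms_summable[OF assms], of m]
  by (simp add: psi_series_def psi_tail_def insert_absorb)

lemma norm_psi_tail_le:
  assumes "z \<in> strip_around m"
  shows "norm (psi_tail a c m z)
           \<le> supnorm c * psi_decay_const a * (\<Sum>\<^sub>\<infinity>k::int. exp (- a * \<bar>of_int k\<bar>))"
proof -
  have "norm (psi_tail a c m z)
      \<le> (\<Sum>\<^sub>\<infinity>k\<in>UNIV - {m}. supnorm c * psi_decay_const a * exp (- a * \<bar>of_int k - of_int m\<bar>))"
    unfolding psi_tail_def
    by (rule norm_infsum_le[OF has_sum_infsum[OF psi_terms_summable[OF assms]]
          has_sum_infsum[OF psi_majorant_summable]])
       (use norm_psi_term_le[OF assms] in auto)
  also have "\<dots> \<le> (\<Sum>\<^sub>\<infinity>k. supnorm c * psi_decay_const a * exp (- a * \<bar>of_int k - of_int m\<bar>))"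
    by (rule infsum_mono_neutral[OF psi_majorant_summable psi_majorant_summable])
       (use supnorm_nonneg[OF c_bounded] psi_decay_const_pos[OF a_pos] in auto)
  also have "\<dots> = supnorm c * psi_decay_const a * (\<Sum>\<^sub>\<infinity>k::int. exp (- a * \<bar>of_int k\<bar>))"
    using exp_neg_abs_int_shift(2)[OF a_pos, of m] by (simp add: infsum_cmult_right')
  finally show ?thesis .
qed

lemma psi_tail_analytic: "psi_tail a c m analytic_on strip_around m"
proof -
  have "(\<lambda>z. c k * psi a (z - of_int k)) holomorphic_on strip_around m"
    if "k \<in> UNIV - {m}" for k
    unfolding psi_eq_inverse_cosh
  proof (intro analytic_imp_holomorphic analytic_intros)
    fix z assume "z \<in> strip_around m"
    have "Re z \<noteq> of_int k"
    proof
      assume "Re z = of_int k"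
      with \<open>z \<in> strip_around m\<close> have "\<bar>of_int (k - m) :: real\<bar> < 1"
        by (simp add: strip_around_def)
      then have "\<bar>k - m\<bar> < 1"
        by (simp only: of_int_abs[symmetric] of_int_less_1_iff)
      then show False
        using that by auto
    qed
    then show "cosh (of_real a * (z - of_int k)) \<noteq> 0"
      by (simp add: cosh_shift_eq_0_iff[OF a_pos])
  qed
  then show ?thesis
    unfolding psi_tail_def[abs_def]
    by (rule analytic_on_infsum[OF open_strip_around _ norm_psi_term_le psi_majorant_summable])
       simp_all
qed

lemma eventually_psi_series_split:
  assumes "z \<in> strip_around m"
  shows "eventually (\<lambda>w. psi_series a c w = c m * psi a (w - of_int m) + psi_tail a c m w) (nhds z)"
  using eventually_nhds_in_open[OF open_strip_around assms]
  by eventually_elim (rule psi_series_split)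

lemma psi_series_analytic: "psi_series a c analytic_on (UNIV - poleset a)"
proof (subst analytic_on_analytic_at, intro ballI)
  fix z assume z: "z \<in> UNIV - poleset a"
  define m where "m = \<lfloor>Re z + 1/2\<rfloor>"
  have strip: "z \<in> strip_around m"
    unfolding m_def by (rule mem_strip_around_nearest)
  have "(\<lambda>w. c m * psi a (w - of_int m) + psi_tail a c m w) analytic_on {z}"
    unfolding psi_eq_inverse_cosh
    using cosh_shift_nonzero_off_poleset[OF a_pos, of z m] z
      analytic_on_subset[OF psi_tail_analytic, of "{z}" m] strip
    by (intro analytic_intros) auto
  then show "psi_series a c analytic_on {z}"
    using analytic_at_cong[OF eventually_psi_series_split[OF strip] refl] by simp
qed

lemma psi_series_meromorphic: "psi_series a c meromorphic_on UNIV"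
proof (subst meromorphic_on_meromorphic_at, intro ballI)
  fix z :: complex
  define m where "m = \<lfloor>Re z + 1/2\<rfloor>"
  have strip: "z \<in> strip_around m"
    unfolding m_def by (rule mem_strip_around_nearest)
  have "(\<lambda>w. cosh (of_real a * (w - of_int m))) analytic_on {z}"
    by (intro analytic_intros)
  then have "(\<lambda>w. c m * psi a (w - of_int m)) meromorphic_on {z}"
    unfolding psi_eq_inverse_cosh
    by (intro meromorphic_on_mult meromorphic_on_const meromorphic_on_inverse
        analytic_on_imp_meromorphic_on)
  moreover have "psi_tail a c m meromorphic_on {z}"
    using analytic_on_subset[OF psi_tail_analytic, of "{z}" m] strip
    by (intro analytic_on_imp_meromorphic_on) auto
  ultimately have "(\<lambda>w. c m * psi a (w - of_int m) + psi_tail a c m w) meromorphic_on {z}"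
    by (rule meromorphic_on_add)
  moreover have "eventually (\<lambda>w. psi_series a c w = c m * psi a (w - of_int m) + psi_tail a c m w) (at z)"
    using eventually_psi_series_split[OF strip] by (simp add: eventually_nhds_conv_at)
  ultimately show "psi_series a c meromorphic_on {z}"
    by (subst meromorphic_on_cong) auto
qed

lemma is_pole_psi_series:
  assumes "is_pole (psi_series a c) z"
  shows "z \<in> poleset a \<and> zorder (psi_series a c) z = -1"
proof -
  have "z \<in> poleset a"
    using assms analytic_at_imp_no_pole analytic_on_subset[OF psi_series_analytic, of "{z}"] by blast
  then obtain m where m: "Re z = of_int m" and cos0: "cos (a * Im z) = 0"
    by (auto simp: mem_poleset_iff[OF a_pos] elim!: Ints_cases)
  define h :: "complex \<Rightarrow> complex" where "h w = cosh (of_real a * (w - of_int m))" for w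
  have strip: "z \<in> strip_around m"
    using m by (simp add: strip_around_def)
  have h0: "h z = 0"
    using m cos0 by (simp add: h_def cosh_shift_eq_0_iff[OF a_pos])
  have tail_hol: "psi_tail a c m holomorphic_on strip_around m"
    using psi_tail_analytic by (rule analytic_imp_holomorphic)
  have ev: "eventually (\<lambda>w. psi_series a c w = c m * inverse (h w) + psi_tail a c m w) (at z)"
    using eventually_psi_series_split[OF strip]
    by (simp add: eventually_nhds_conv_at h_def psi_eq_inverse_cosh)
  show ?thesis
  proof (cases "c m = 0")
    case True
    have "is_pole (psi_tail a c m) z"
      using is_pole_cong[OF ev refl] assms True by simp
    then show ?thesis
      using not_is_pole_holomorphic[OF open_strip_around strip tail_hol] by contradiction
  next
    case False
    have "deriv h z = of_real a * sinh (of_real a * (z - of_int m))"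
      unfolding h_def by (rule DERIV_imp_deriv) (auto intro!: derivative_eq_intros)
    moreover have "sinh (of_real a * (z - of_int m)) \<noteq> 0"
      using h0 hyperbolic_pythagoras[of "of_real a * (z - of_int m) :: complex"] by (auto simp: h_def)
    ultimately have "deriv h z \<noteq> 0"
      using a_pos by simp
    moreover have "h holomorphic_on strip_around m"
      unfolding h_def by (intro analytic_imp_holomorphic analytic_intros)
    ultimately have "zorder (\<lambda>w. c m * inverse (h w) + psi_tail a c m w) z = -1"
      using False h0 tail_hol strip
      by (intro zorder_inverse_simple_zero_plus_holomorphic[OF open_strip_around]) auto
    then show ?thesis
      using zorder_cong[OF ev refl] \<open>z \<in> poleset a\<close> by simp
  qed
qed

lemma norm_psi_series_le:
  assumes "Complex x y \<notin> poleset a"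
  shows "norm (psi_series a c (Complex x y))
           \<le> psi_series_const a * supnorm c * norm (psi a (Complex (cfrac x) y))"
proof -
  define z where "z = Complex x y"
  define m where "m = \<lfloor>x + 1/2\<rfloor>"
  define p where "p = norm (psi a (Complex (cfrac x) y))"
  have shift: "z - of_int m = Complex (cfrac x) y"
    by (simp add: z_def m_def cfrac_def complex_eq_iff)
  have strip: "z \<in> strip_around m"
    using mem_strip_around_nearest[of z] by (simp add: z_def m_def)
  have "cosh (of_real a * (z - of_int m)) \<noteq> 0"
    using cosh_shift_nonzero_off_poleset[OF a_pos] assms by (simp add: z_def)
  then have "inverse (cosh (a * cfrac x)) \<le> p"
    using inverse_cosh_Re_le_norm_inverse_cosh[of "of_real a * Complex (cfrac x) y"]
    by (simp add: p_def psi_eq_inverse_cosh shift)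
  moreover have "\<bar>a * cfrac x\<bar> \<le> a / 2"
    using cfrac_bounds[of x] a_pos by (simp add: abs_mult abs_le_iff)
  then have "cosh \<bar>a * cfrac x\<bar> \<le> cosh (a / 2)"
    using a_pos by (subst cosh_real_nonneg_le_iff) auto
  then have "inverse (cosh (a / 2)) \<le> inverse (cosh (a * cfrac x))"
    by (intro le_imp_inverse_le) simp_all
  ultimately have "inverse (cosh (a / 2)) \<le> p"
    by linarith
  then have one: "1 \<le> cosh (a / 2) * p"
    by (simp add: field_simps)
  have "norm (psi_series a c z) \<le> norm (c m) * p + norm (psi_tail a c m z)"
    using psi_series_split[OF strip]
      norm_triangle_ineq[of "c m * psi a (z - of_int m)" "psi_tail a c m z"]
    by (simp add: p_def shift norm_mult)
  also have "\<dots> \<le> supnorm c * p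
      + supnorm c * psi_decay_const a * (\<Sum>\<^sub>\<infinity>k::int. exp (- a * \<bar>of_int k\<bar>))"
    using mult_right_mono[OF norm_le_supnorm[OF c_bounded], of p m]
      norm_psi_tail_le[OF strip]
    by (simp add: p_def)
  also have "\<dots> \<le> supnorm c * p
      + supnorm c * psi_decay_const a * (\<Sum>\<^sub>\<infinity>k::int. exp (- a * \<bar>of_int k\<bar>)) * (cosh (a / 2) * p)"
  proof -
    have "0 \<le> supnorm c * psi_decay_const a * (\<Sum>\<^sub>\<infinity>k::int. exp (- a * \<bar>of_int k\<bar>))"
      using supnorm_nonneg[OF c_bounded] psi_decay_const_pos[OF a_pos]
      by (intro mult_nonneg_nonneg infsum_nonneg) auto
    from mult_left_mono[OF one this] show ?thesis
      by simp
  qed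
  also have "\<dots> = psi_series_const a * supnorm c * p"
    by (simp add: psi_series_const_def algebra_simps)
  finally show ?thesis
    by (simp add: z_def p_def)
qed

end

lemma norm_psi_le_inverse_abs_Re:
  assumes "a \<noteq> 0" "u \<noteq> 0"
  shows "norm (psi a (Complex u y)) \<le> 1 / \<bar>a * u\<bar>"
  using norm_inverse_cosh_le_inverse_abs_Re[of "of_real a * Complex u y"] assms
  by (simp add: psi_eq_inverse_cosh divide_inverse)

lemma norm_psi_le_inverse_cfrac_Im:
  assumes "cfrac (a * y / pi - 1/2) \<noteq> 0"
  shows "norm (psi a (Complex u y)) \<le> 1 / \<bar>2 * cfrac (a * y / pi - 1/2)\<bar>"
proof -
  have cos_ge: "\<bar>2 * cfrac (a * y / pi - 1/2)\<bar> \<le> \<bar>cos (a * y)\<bar>"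
    using two_abs_cfrac_le_abs_cos[of "a * y"] by (simp add: abs_mult)
  have "norm (psi a (Complex u y)) \<le> inverse \<bar>cos (a * y)\<bar>"
    using norm_inverse_cosh_le_inverse_abs_cos_Im[of "of_real a * Complex u y"] cos_ge assms
    by (simp add: psi_eq_inverse_cosh)
  also have "\<dots> \<le> inverse \<bar>2 * cfrac (a * y / pi - 1/2)\<bar>"
    using cos_ge assms by (intro le_imp_inverse_le) auto
  finally show ?thesis
    by (simp only: inverse_eq_divide)
qed

theorem lemma4p4:
  fixes a :: real
  assumes "a > 0"
  shows "\<exists>C>0. \<forall>c :: int \<Rightarrow> complex. bdd_above (range (\<lambda>k. norm (c k))) \<longrightarrow>
     (\<exists>F :: complex \<Rightarrow> complex.
        F meromorphic_on UNIV \<and>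
        F analytic_on (UNIV - poleset a) \<and>
        (\<forall>x :: real. F (complex_of_real x) =
            (\<Sum>\<^sub>\<infinity>k\<in>(UNIV :: int set). c k * psi a (complex_of_real x - of_int k))) \<and>
        (\<forall>z. is_pole F z \<longrightarrow> z \<in> poleset a \<and> zorder F z = -1) \<and>
        (\<forall>x y :: real. Complex x y \<notin> poleset a \<longrightarrow>
            norm (F (Complex x y)) \<le> C * supnorm c * norm (psi a (Complex (cfrac x) y)) \<and>
            (cfrac x \<noteq> 0 \<longrightarrow>
               C * supnorm c * norm (psi a (Complex (cfrac x) y)) \<le> C * supnorm c / \<bar>a * cfrac x\<bar>) \<and>
            (cfrac (a * y / pi - 1/2) \<noteq> 0 \<longrightarrow>
               C * supnorm c * norm (psi a (Complex (cfrac x) y))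
                 \<le> C * supnorm c / \<bar>2 * cfrac (a * y / pi - 1/2)\<bar>)))"
proof (intro exI[of _ "psi_series_const a"] conjI allI impI, goal_cases)
  case 1
  show ?case
    using assms by (rule psi_series_const_pos)
next
  case (2 c)
  have K: "0 \<le> psi_series_const a * supnorm c"
    using psi_series_const_pos[OF assms] supnorm_nonneg[OF 2] by simp
  have a: "a \<noteq> 0"
    using assms by simp
  have "psi_series_const a * supnorm c * norm (psi a (Complex (cfrac x) y))
          \<le> psi_series_const a * supnorm c / \<bar>a * cfrac x\<bar>" if "cfrac x \<noteq> 0" for x y
    using mult_left_mono[OF norm_psi_le_inverse_abs_Re[OF a that] K]
    by (simp only: times_divide_eq_right mult_1_right)
  moreover have "psi_series_const a * supnorm c * norm (psi a (Complex (cfrac x) y))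
          \<le> psi_series_const a * supnorm c / \<bar>2 * cfrac (a * y / pi - 1/2)\<bar>"
    if "cfrac (a * y / pi - 1/2) \<noteq> 0" for x y
    using mult_left_mono[OF norm_psi_le_inverse_cfrac_Im[OF that] K]
    by (simp only: times_divide_eq_right mult_1_right)
  ultimately show ?case
    using psi_series_meromorphic[OF assms 2] psi_series_analytic[OF assms 2]
      is_pole_psi_series[OF assms 2] norm_psi_series_le[OF assms 2]
    by (intro exI[of _ "psi_series a c"]) (simp add: psi_series_def)
qed

end
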